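(* Let $m \ge 2$ be an integer, let $n = 6m+1$, and let $G$ be the circulant graph on $n$ vertices with distance set $S = \{m\} \cup \{2m+1, 2m+2, \dots, 3m\}$; equivalently, vertices $u,v \in \mathbb{Z}/n\mathbb{Z}$ are adjacent if and only if $(u - v) \bmod n \in \{m, 5m+1\} \cup \{2m+1, \dots, 4m\}$. Then $G$ is a doubly saturated $R(4, m+2)$-good graph. More precisely: (1) $G$ contains no clique of size $4$; (2) $G$ contains no independent set of size $m+2$; (3) for every non-edge $\{u,v\}$ of $G$, the graph obtained by adding the edge $uv$ contains a clique of size $4$; (4) for every edge $\{u,v\}$ of $G$, the graph obtained by deleting the edge $uv$ contains an independent set of size $m+2$; and $G$ is neither complete nor edgeless.
   Context: For $x \in \mathbb{Z}/n\mathbb{Z}$, let $\|x\| := \min(x \bmod n,\; n - (x \bmod n))$. The circulant graph on $n$ vertices with distance set $S \subseteq \{1,\dots,\lfloor n/2\rfloor\}$ has vertex set $\mathbb{Z}/n\mathbb{Z}$, with $x$ and $y$ adjacent if and only if $\|x-y\| \in S$. A graph $G$ is \emph{$R(s,t)$-good} if it contains no clique of size $s$ and no independent set of size $t$. A graph $G$ is \emph{doubly saturated $R(s,t)$-good} if it is $R(s,t)$-good, adding any single missing edge yields a graph that is not $R(s,t)$-good, removing any single edge yields a graph that is not $R(s,t)$-good, and $G$ is neither complete nor edgeless. *)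

theory Defs
  imports Main
begin

text \<open>Simple graphs are given by a vertex set V and an adjacency predicate E
(intended symmetric and irreflexive on V).\<close>

definition has_clique :: "'a set \<Rightarrow> ('a \<Rightarrow> 'a \<Rightarrow> bool) \<Rightarrow> nat \<Rightarrow> bool" where
  "has_clique V E k \<longleftrightarrow> (\<exists>C. C \<subseteq> V \<and> card C = k \<and> (\<forall>x\<in>C. \<forall>y\<in>C. x \<noteq> y \<longrightarrow> E x y))"

definition has_indep :: "'a set \<Rightarrow> ('a \<Rightarrow> 'a \<Rightarrow> bool) \<Rightarrow> nat \<Rightarrow> bool" where
  "has_indep V E k \<longleftrightarrow> (\<exists>I. I \<subseteq> V \<and> card I = k \<and> (\<forall>x\<in>I. \<forall>y\<in>I. x \<noteq> y \<longrightarrow> \<not> E x y))"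

definition ramsey_good :: "nat \<Rightarrow> nat \<Rightarrow> 'a set \<Rightarrow> ('a \<Rightarrow> 'a \<Rightarrow> bool) \<Rightarrow> bool" where
  "ramsey_good s t V E \<longleftrightarrow> \<not> has_clique V E s \<and> \<not> has_indep V E t"

definition add_edge :: "('a \<Rightarrow> 'a \<Rightarrow> bool) \<Rightarrow> 'a \<Rightarrow> 'a \<Rightarrow> ('a \<Rightarrow> 'a \<Rightarrow> bool)" where
  "add_edge E u v = (\<lambda>x y. E x y \<or> (x = u \<and> y = v) \<or> (x = v \<and> y = u))"

definition remove_edge :: "('a \<Rightarrow> 'a \<Rightarrow> bool) \<Rightarrow> 'a \<Rightarrow> 'a \<Rightarrow> ('a \<Rightarrow> 'a \<Rightarrow> bool)" where
  "remove_edge E u v = (\<lambda>x y. E x y \<and> \<not> ((x = u \<and> y = v) \<or> (x = v \<and> y = u)))"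

definition doubly_saturated_good :: "nat \<Rightarrow> nat \<Rightarrow> 'a set \<Rightarrow> ('a \<Rightarrow> 'a \<Rightarrow> bool) \<Rightarrow> bool" where
  "doubly_saturated_good s t V E \<longleftrightarrow>
     ramsey_good s t V E
     \<and> (\<forall>u\<in>V. \<forall>v\<in>V. u \<noteq> v \<and> \<not> E u v \<longrightarrow> \<not> ramsey_good s t V (add_edge E u v))
     \<and> (\<forall>u\<in>V. \<forall>v\<in>V. u \<noteq> v \<and> E u v \<longrightarrow> \<not> ramsey_good s t V (remove_edge E u v))
     \<and> (\<exists>u\<in>V. \<exists>v\<in>V. u \<noteq> v \<and> \<not> E u v)
     \<and> (\<exists>u\<in>V. \<exists>v\<in>V. u \<noteq> v \<and> E u v)"

definition cnorm :: "nat \<Rightarrow> int \<Rightarrow> int" where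
  "cnorm n x = min (x mod int n) (int n - x mod int n)"

definition circ_vertices :: "nat \<Rightarrow> nat set" where
  "circ_vertices n = {0..<n}"

definition circ_adj :: "nat \<Rightarrow> int set \<Rightarrow> nat \<Rightarrow> nat \<Rightarrow> bool" where
  "circ_adj n S x y \<longleftrightarrow> cnorm n (int x - int y) \<in> S"

end

(*
  For vertices x, y in [0, n), adjacency in G means that |x - y| lies in
  Q = edge_differences m = {m, 5m+1} \<union> [2m+1, 4m].  Four vertices a < b < c < d of a
  clique would have all six differences in Q, which a case analysis on these three ranges
  rules out.

  For an independent set I pick x0 in I and lift every y in I to the representative of y - x0
  in [-2m, 4m].  Non-adjacency to x0 forces the lifts into [-2m, 2m]; then any two lifts differ
  by at most 2m and never by exactly m, and pairing j with j + m shows |I| \<le> m + 1.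

  For saturation, rotation and symmetry reduce every pair of distinct vertices to (u, u + k) with
  0 < k \<le> 3m, and for each such k an explicit 4-clique through the added edge, respectively
  an explicit independent (m+2)-set through the deleted edge, is written down as a set of offsets.
*)

theory Submission
  imports Defs
begin

lemma card_eq_4_sorted:
  fixes C :: "'a::linorder set"
  assumes "card C = 4"
  obtains a b c d where "a < b" "b < c" "c < d" "C = {a, b, c, d}"
proof -
  have "finite C" using assms by (metis card.infinite zero_neq_numeral)
  define xs where "xs = sorted_list_of_set C"
  have xs: "sorted_wrt (<) xs" "set xs = C" "length xs = 4"
    using \<open>finite C\<close> assms by (simp_all add: xs_def)
  then obtain a b c d where "xs = [a, b, c, d]"
    by (auto simp: numeral_eq_Suc length_Suc_conv)
  with xs that show ?thesis by auto
qed

lemma card_le_Suc_if_diffs_le_twice_ne: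
  fixes T :: "int set"
  assumes "finite T"
    and le: "\<And>s t. s \<in> T \<Longrightarrow> t \<in> T \<Longrightarrow> t - s \<le> 2 * int m"
    and ne: "\<And>s t. s \<in> T \<Longrightarrow> t \<in> T \<Longrightarrow> t - s \<noteq> int m"
  shows "card T \<le> m + 1"
proof (cases "T = {}")
  case False
  define a where "a = Min T"
  have a: "a \<in> T" "\<And>s. s \<in> T \<Longrightarrow> a \<le> s"
    using \<open>finite T\<close> False by (simp_all add: a_def)
  define g where "g s = (if s - a < int m then s - a else s - a - int m)" for s
  have "g ` T \<subseteq> {0..int m}"
    using a le[OF a(1)] ne[OF a(1)] by (force simp: g_def)
  moreover have "inj_on g T"
  proof (rule inj_onI)
    fix s t assume "s \<in> T" "t \<in> T" "g s = g t"
    then show "s = t" using ne[of s t] ne[of t s] by (auto simp: g_def split: if_splits)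
  qed
  ultimately have "card T \<le> card {0..int m}"
    by (metis card_image card_mono finite_atLeastAtMost_int)
  then show ?thesis by simp
qed simp

lemma has_clique_image:
  assumes "inj_on f A" "f ` A \<subseteq> V" "card A = k"
    and "\<And>a b. a \<in> A \<Longrightarrow> b \<in> A \<Longrightarrow> a \<noteq> b \<Longrightarrow> E (f a) (f b)"
  shows "has_clique V E k"
  unfolding has_clique_def
  using assms by (intro exI[of _ "f ` A"]) (auto simp: card_image inj_on_eq_iff)

lemma has_indep_image:
  assumes "inj_on f A" "f ` A \<subseteq> V" "card A = k"
    and "\<And>a b. a \<in> A \<Longrightarrow> b \<in> A \<Longrightarrow> a \<noteq> b \<Longrightarrow> \<not> E (f a) (f b)"
  shows "has_indep V E k"
  unfolding has_indep_def
  using assms by (intro exI[of _ "f ` A"]) (auto simp: card_image inj_on_eq_iff)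

lemma add_edge_commute: "add_edge E u v = add_edge E v u"
  unfolding add_edge_def by auto

lemma remove_edge_commute: "remove_edge E u v = remove_edge E v u"
  unfolding remove_edge_def by auto

lemma cnorm_cong: "x mod int n = y mod int n \<Longrightarrow> cnorm n x = cnorm n y"
  by (simp add: cnorm_def)

lemma cnorm_uminus: "cnorm n (- x) = cnorm n x"
  unfolding cnorm_def zmod_zminus1_eq_if by (auto simp: min_def)

lemma cnorm_eq_min_abs:
  assumes "\<bar>d\<bar> < int n"
  shows "cnorm n d = min \<bar>d\<bar> (int n - \<bar>d\<bar>)"
proof -
  have "d mod int n = (if 0 \<le> d then d else d + int n)"
  proof (cases "0 \<le> d")
    case False
    then have "d mod int n = (d + int n) mod int n" by simp
    also have "\<dots> = d + int n" using assms False by (intro mod_pos_pos_trivial) auto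
    finally show ?thesis using False by simp
  qed (use assms in auto)
  then show ?thesis by (auto simp: cnorm_def min_def)
qed

lemma circ_adj_commute: "circ_adj n S x y \<longleftrightarrow> circ_adj n S y x"
  unfolding circ_adj_def by (metis cnorm_uminus minus_diff_eq)

definition circ_shift :: "nat \<Rightarrow> nat \<Rightarrow> int \<Rightarrow> nat" where
  "circ_shift n u a = nat ((int u + a) mod int n)"

lemma int_circ_shift: "0 < n \<Longrightarrow> int (circ_shift n u a) = (int u + a) mod int n"
  by (simp add: circ_shift_def)

lemma circ_shift_in_vertices: "0 < n \<Longrightarrow> circ_shift n u a \<in> circ_vertices n"
  by (simp add: circ_shift_def circ_vertices_def nat_less_iff)

lemma circ_shift_0: "u < n \<Longrightarrow> circ_shift n u 0 = u"
  by (simp add: circ_shift_def)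

lemma circ_shift_diff: "v < n \<Longrightarrow> circ_shift n u (int v - int u) = v"
  by (simp add: circ_shift_def)

lemma circ_shift_eq_iff:
  assumes "0 < n"
  shows "circ_shift n u a = circ_shift n u b \<longleftrightarrow> a mod int n = b mod int n"
proof -
  have "circ_shift n u a = circ_shift n u b \<longleftrightarrow> (int u + a) mod int n = (int u + b) mod int n"
    unfolding of_nat_eq_iff[symmetric, where 'a=int] int_circ_shift[OF assms] ..
  also have "\<dots> \<longleftrightarrow> a mod int n = b mod int n"
  proof
    assume "(int u + a) mod int n = (int u + b) mod int n"
    from mod_diff_cong[OF this refl, of "int u"] show "a mod int n = b mod int n" by simp
  qed (rule mod_add_cong[OF refl])
  finally show ?thesis .
qed

lemma inj_on_circ_shift: "0 < n \<Longrightarrow> inj_on (circ_shift n u) {0..<int n}"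
  by (rule inj_onI) (simp add: circ_shift_eq_iff)

lemma circ_adj_circ_shift:
  assumes "0 < n"
  shows "circ_adj n S (circ_shift n u a) (circ_shift n u b) \<longleftrightarrow> cnorm n (a - b) \<in> S"
proof -
  have "((int u + a) mod int n - (int u + b) mod int n) mod int n = (a - b) mod int n"
    by (simp add: mod_diff_eq)
  then have "cnorm n ((int u + a) mod int n - (int u + b) mod int n) = cnorm n (a - b)"
    by (rule cnorm_cong)
  then show ?thesis
    unfolding circ_adj_def int_circ_shift[OF assms] by simp
qed

lemma has_clique_add_edge_circ_shift:
  assumes "0 < n" "u < n" "A \<subseteq> {0..<int n}" "card A = s"
    and "\<And>a b. a \<in> A \<Longrightarrow> b \<in> A \<Longrightarrow> a \<noteq> b \<Longrightarrow> {a, b} \<noteq> {0, k} \<Longrightarrow> cnorm n (a - b) \<in> S"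
  shows "has_clique (circ_vertices n) (add_edge (circ_adj n S) u (circ_shift n u k)) s"
proof (rule has_clique_image)
  show "inj_on (circ_shift n u) A" using inj_on_subset[OF inj_on_circ_shift assms(3)] assms(1) .
  show "circ_shift n u ` A \<subseteq> circ_vertices n" using circ_shift_in_vertices assms(1) by blast
  fix a b assume "a \<in> A" "b \<in> A" "a \<noteq> b"
  then show "add_edge (circ_adj n S) u (circ_shift n u k) (circ_shift n u a) (circ_shift n u b)"
    using assms circ_adj_circ_shift circ_shift_0
    by (cases "{a, b} = {0, k}") (auto simp: add_edge_def doubleton_eq_iff)
qed fact

lemma has_indep_remove_edge_circ_shift:
  assumes "0 < n" "u < n" "A \<subseteq> {0..<int n}" "card A = s"
    and "\<And>a b. a \<in> A \<Longrightarrow> b \<in> A \<Longrightarrow> a \<noteq> b \<Longrightarrow> {a, b} \<noteq> {0, k} \<Longrightarrow> cnorm n (a - b) \<notin> S"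
  shows "has_indep (circ_vertices n) (remove_edge (circ_adj n S) u (circ_shift n u k)) s"
proof (rule has_indep_image)
  show "inj_on (circ_shift n u) A" using inj_on_subset[OF inj_on_circ_shift assms(3)] assms(1) .
  show "circ_shift n u ` A \<subseteq> circ_vertices n" using circ_shift_in_vertices assms(1) by blast
  fix a b assume "a \<in> A" "b \<in> A" "a \<noteq> b"
  then show "\<not> remove_edge (circ_adj n S) u (circ_shift n u k) (circ_shift n u a) (circ_shift n u b)"
    using assms circ_adj_circ_shift circ_shift_0
    by (cases "{a, b} = {0, k}") (auto simp: remove_edge_def doubleton_eq_iff)
qed fact

definition edge_differences :: "nat \<Rightarrow> int set" where
  "edge_differences m = {int m, 5 * int m + 1} \<union> {2 * int m + 1..4 * int m}"

lemma mem_edge_differences: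
  "r \<in> edge_differences m \<longleftrightarrow> r = int m \<or> r = 5 * int m + 1 \<or> (2 * int m + 1 \<le> r \<and> r \<le> 4 * int m)"
  by (auto simp: edge_differences_def)

lemma no_4_points_with_edge_differences:
  fixes a b c d :: int
  assumes "a < b" "b < c" "c < d" "d - a \<le> 6 * int m"
    and "b - a \<in> edge_differences m" "c - a \<in> edge_differences m" "d - a \<in> edge_differences m"
    and "c - b \<in> edge_differences m" "d - b \<in> edge_differences m" "d - c \<in> edge_differences m"
  shows False
  using assms unfolding mem_edge_differences by (elim disjE conjE; linarith)

locale circulant_R4_good =
  fixes m n :: nat and S :: "int set"
  assumes m_ge_2: "2 \<le> m"
    and n_eq: "n = 6 * m + 1"
    and S_eq: "S = {int m} \<union> {int (2 * m + 1)..int (3 * m)}"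
begin

lemma int_n: "int n = 6 * int m + 1"
  using n_eq by simp

lemma n_pos: "0 < n"
  using n_eq by simp

lemma cnorm_mem_S_iff: "\<bar>d\<bar> < int n \<Longrightarrow> cnorm n d \<in> S \<longleftrightarrow> \<bar>d\<bar> \<in> edge_differences m"
  by (simp add: cnorm_eq_min_abs S_eq edge_differences_def int_n min_def) arith

lemma circ_adj_iff: "x < n \<Longrightarrow> y < n \<Longrightarrow> circ_adj n S x y \<longleftrightarrow> \<bar>int x - int y\<bar> \<in> edge_differences m"
  unfolding circ_adj_def by (rule cnorm_mem_S_iff) simp

lemma circ_adj_circ_shift_iff:
  "\<bar>a - b\<bar> < int n \<Longrightarrow>
    circ_adj n S (circ_shift n u a) (circ_shift n u b) \<longleftrightarrow> \<bar>a - b\<bar> \<in> edge_differences m"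
  using circ_adj_circ_shift[OF n_pos] cnorm_mem_S_iff by simp

lemma no_4_clique: "\<not> has_clique (circ_vertices n) (circ_adj n S) 4"
proof
  assume "has_clique (circ_vertices n) (circ_adj n S) 4"
  then obtain C where C: "C \<subseteq> circ_vertices n" "card C = 4"
    and adj: "\<And>x y. x \<in> C \<Longrightarrow> y \<in> C \<Longrightarrow> x \<noteq> y \<Longrightarrow> circ_adj n S x y"
    unfolding has_clique_def by blast
  obtain a b c d where abcd: "a < b" "b < c" "c < d" and C_eq: "C = {a, b, c, d}"
    using card_eq_4_sorted[OF C(2)] .
  have gap: "int y - int x \<in> edge_differences m" if "x \<in> C" "y \<in> C" "x < y" for x y
    using adj[OF that(2,1)] circ_adj_iff[of y x] C(1) that by (auto simp: circ_vertices_def)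
  have "d < n" using C(1) C_eq by (auto simp: circ_vertices_def)
  then show False
    using no_4_points_with_edge_differences[of "int a" "int b" "int c" "int d" m]
      gap[of a b] gap[of a c] gap[of a d] gap[of b c] gap[of b d] gap[of c d] abcd
    by (simp add: C_eq n_eq)
qed

lemma independent_set_lift:
  assumes I: "I \<subseteq> circ_vertices n" "x0 \<in> I"
    and indep: "\<And>x y. x \<in> I \<Longrightarrow> y \<in> I \<Longrightarrow> x \<noteq> y \<Longrightarrow> \<not> circ_adj n S x y"
  obtains lift :: "nat \<Rightarrow> int" where "inj_on lift I"
    "\<And>y y'. y \<in> I \<Longrightarrow> y' \<in> I \<Longrightarrow> lift y - lift y' \<le> 2 * int m \<and> lift y - lift y' \<noteq> int m"
proof -
  define lift where "lift y = (int y - int x0 + 2 * int m) mod int n - 2 * int m" for y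
  have shift_lift: "circ_shift n x0 (lift y) = y" if "y \<in> I" for y
  proof -
    have "lift y mod int n = (int y - int x0) mod int n"
      unfolding lift_def by (simp add: mod_diff_left_eq)
    moreover have "y < n"
      using I(1) that by (auto simp: circ_vertices_def)
    ultimately show ?thesis
      using circ_shift_diff circ_shift_eq_iff[OF n_pos] by metis
  qed
  have lift_range: "- 2 * int m \<le> lift y \<and> lift y \<le> 4 * int m" for y
  proof -
    have "(int y - int x0 + 2 * int m) mod int n \<in> {0..<int n}"
      using n_pos by simp
    then show ?thesis using int_n unfolding lift_def by auto
  qed
  have lift_x0: "lift x0 = 0"
    using int_n by (simp add: lift_def)
  have lift_non_adj: "\<bar>lift y - lift y'\<bar> \<notin> edge_differences m"
    if "y \<in> I" "y' \<in> I" "y \<noteq> y'" "\<bar>lift y - lift y'\<bar> < int n" for y y'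
    using indep[OF that(1-3)] circ_adj_circ_shift_iff[OF that(4), of x0] shift_lift that(1,2)
    by simp
  have lift_abs: "\<bar>lift y\<bar> \<le> 2 * int m" if "y \<in> I" for y
  proof (cases "y = x0")
    case False
    then show ?thesis
      using lift_non_adj[OF that I(2)] lift_range[of y] lift_x0 int_n
      unfolding mem_edge_differences by arith
  qed (simp add: lift_x0)
  show ?thesis
  proof (rule that)
    show "inj_on lift I"
      by (rule inj_onI) (metis shift_lift)
    fix y y' assume "y \<in> I" "y' \<in> I"
    then show "lift y - lift y' \<le> 2 * int m \<and> lift y - lift y' \<noteq> int m"
      using lift_non_adj[of y y'] lift_abs[of y] lift_abs[of y'] int_n m_ge_2
      unfolding mem_edge_differences by (cases "y = y'") (simp, arith)
  qed
qed

lemma no_independent_set: "\<not> has_indep (circ_vertices n) (circ_adj n S) (m + 2)"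
proof
  assume "has_indep (circ_vertices n) (circ_adj n S) (m + 2)"
  then obtain I where I: "I \<subseteq> circ_vertices n" "card I = m + 2"
    and indep: "\<And>x y. x \<in> I \<Longrightarrow> y \<in> I \<Longrightarrow> x \<noteq> y \<Longrightarrow> \<not> circ_adj n S x y"
    unfolding has_indep_def by blast
  then have "finite I" "I \<noteq> {}"
    by (auto intro!: card_ge_0_finite)
  then obtain x0 where "x0 \<in> I"
    by blast
  from I(1) this indep obtain lift :: "nat \<Rightarrow> int" where "inj_on lift I"
    and diffs: "\<And>y y'. y \<in> I \<Longrightarrow> y' \<in> I \<Longrightarrow> lift y - lift y' \<le> 2 * int m \<and> lift y - lift y' \<noteq> int m"
    using independent_set_lift by metis
  then have "card (lift ` I) = m + 2"
    using I(2) by (simp add: card_image)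
  moreover have "card (lift ` I) \<le> m + 1"
    using \<open>finite I\<close> diffs by (intro card_le_Suc_if_diffs_le_twice_ne) auto
  ultimately show False
    by simp
qed

lemma clique_offsets:
  assumes "0 < k" "k \<le> 3 * int m" "k \<notin> edge_differences m"
  obtains A where "A \<subseteq> {0..<int n}" "card A = 4"
    "\<And>a b. a \<in> A \<Longrightarrow> b \<in> A \<Longrightarrow> a \<noteq> b \<Longrightarrow> {a, b} \<noteq> {0, k} \<Longrightarrow> \<bar>a - b\<bar> \<in> edge_differences m"
proof (cases "k < int m")
  case True
  show ?thesis
  proof (rule that[of "{0, k, 3 * int m, 4 * int m}"])
    show "card {0, k, 3 * int m, 4 * int m} = 4"
      using True assms(1) by simp
  qed (use True assms(1) int_n in \<open>auto simp: mem_edge_differences doubleton_eq_iff\<close>)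
next
  case False
  then have k: "int m < k" "k \<le> 2 * int m"
    using assms by (auto simp: mem_edge_differences)
  show ?thesis
  proof (rule that[of "{0, k, k + int m, 5 * int m + 1}"])
    show "card {0, k, k + int m, 5 * int m + 1} = 4"
      using k by simp
  qed (use k int_n in \<open>auto simp: mem_edge_differences doubleton_eq_iff\<close>)
qed

lemma independent_offsets:
  assumes "0 < k" "k \<le> 3 * int m" "k \<in> edge_differences m"
  obtains A where "A \<subseteq> {0..<int n}" "card A = m + 2"
    "\<And>a b. a \<in> A \<Longrightarrow> b \<in> A \<Longrightarrow> a \<noteq> b \<Longrightarrow> {a, b} \<noteq> {0, k} \<Longrightarrow> \<bar>a - b\<bar> \<notin> edge_differences m"
proof -
  consider "k = int m" | "k = 3 * int m" | "2 * int m < k" "k < 3 * int m"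
    using assms unfolding mem_edge_differences by linarith
  then show ?thesis
  proof cases
    case 1
    let ?A = "{0, int m, 2 * int m - 1, 6 * int m} \<union> {1..int m - 2}"
    show ?thesis
    proof (rule that[of ?A])
      have "card ?A = card {0, int m, 2 * int m - 1, 6 * int m} + card {1..int m - 2}"
        by (rule card_Un_disjoint) auto
      then show "card ?A = m + 2"
        using m_ge_2 by simp
    qed (use 1 m_ge_2 int_n in \<open>auto simp: mem_edge_differences doubleton_eq_iff\<close>)
  next
    case 2
    let ?A = "{0, 3 * int m} \<union> {4 * int m + 1..5 * int m}"
    show ?thesis
    proof (rule that[of ?A])
      have "card ?A = card {0, 3 * int m} + card {4 * int m + 1..5 * int m}"
        by (rule card_Un_disjoint) auto
      then show "card ?A = m + 2"
        using m_ge_2 by simp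
    qed (use 2 m_ge_2 int_n in \<open>auto simp: mem_edge_differences doubleton_eq_iff\<close>)
  next
    case 3
    let ?B = "{k - 2 * int m..k - int m - 1} - {int m}"
    let ?A = "{0, k, 2 * int m} \<union> ?B"
    show ?thesis
    proof (rule that[of ?A])
      have "card ?A = card {0, k, 2 * int m} + card ?B"
        by (rule card_Un_disjoint) (use 3 in auto)
      moreover have "card ?B = m - 1"
        using 3 by (subst card_Diff_singleton) auto
      ultimately show "card ?A = m + 2"
        using 3 m_ge_2 by simp
    qed (use 3 m_ge_2 int_n in \<open>auto simp: mem_edge_differences doubleton_eq_iff\<close>)
  qed
qed

lemma obtain_short_offset:
  assumes "u < n" "v < n" "u \<noteq> v"
  obtains k where "0 < k" "k \<le> 3 * int m" "circ_shift n u k = v"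
    | k where "0 < k" "k \<le> 3 * int m" "circ_shift n v k = u"
proof -
  define r where "r = (int v - int u) mod int n"
  have "circ_shift n u r = circ_shift n u (int v - int u)"
    by (simp add: circ_shift_eq_iff[OF n_pos] r_def)
  then have shift_r: "circ_shift n u r = v"
    using circ_shift_diff[OF assms(2)] by simp
  have "(int n - r) mod int n = (int u - int v) mod int n"
    unfolding r_def by (simp add: mod_minus_eq)
  then have "circ_shift n v (int n - r) = circ_shift n v (int u - int v)"
    by (simp add: circ_shift_eq_iff[OF n_pos])
  then have shift_back: "circ_shift n v (int n - r) = u"
    using circ_shift_diff[OF assms(1)] by simp
  have "r \<noteq> 0"
    using shift_r circ_shift_0[OF assms(1)] assms(3) by auto
  moreover have "0 \<le> r" "r < int n"
    using n_pos by (simp_all add: r_def)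
  ultimately show ?thesis
  proof (cases "r \<le> 3 * int m")
    case True
    with \<open>r \<noteq> 0\<close> \<open>0 \<le> r\<close> show ?thesis
      by (intro that(1)[OF _ _ shift_r]) auto
  next
    case False
    with \<open>r < int n\<close> show ?thesis
      using int_n by (intro that(2)[OF _ _ shift_back]) auto
  qed
qed

lemma add_edge_circ_shift_creates_4_clique:
  assumes "u < n" "0 < k" "k \<le> 3 * int m" "\<not> circ_adj n S u (circ_shift n u k)"
  shows "has_clique (circ_vertices n) (add_edge (circ_adj n S) u (circ_shift n u k)) 4"
proof -
  have "\<bar>0 - k\<bar> < int n"
    using assms(2,3) int_n by simp
  from circ_adj_circ_shift_iff[OF this, of u] assms have "k \<notin> edge_differences m"
    by (simp add: circ_shift_0)
  with assms(2,3) obtain A where A: "A \<subseteq> {0..<int n}" "card A = 4"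
    and adj: "\<And>a b. a \<in> A \<Longrightarrow> b \<in> A \<Longrightarrow> a \<noteq> b \<Longrightarrow> {a, b} \<noteq> {0, k} \<Longrightarrow>
      \<bar>a - b\<bar> \<in> edge_differences m"
    by (rule clique_offsets) blast
  have "cnorm n (a - b) \<in> S"
    if "a \<in> A" "b \<in> A" "a \<noteq> b" "{a, b} \<noteq> {0, k}" for a b
  proof -
    have "\<bar>a - b\<bar> < int n"
      using subsetD[OF A(1) that(1)] subsetD[OF A(1) that(2)] by (auto simp: abs_less_iff)
    then show ?thesis
      using adj[OF that] cnorm_mem_S_iff by simp
  qed
  then show ?thesis
    by (rule has_clique_add_edge_circ_shift[OF n_pos assms(1) A])
qed

lemma remove_edge_circ_shift_creates_independent_set:
  assumes "u < n" "0 < k" "k \<le> 3 * int m" "circ_adj n S u (circ_shift n u k)"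
  shows "has_indep (circ_vertices n) (remove_edge (circ_adj n S) u (circ_shift n u k)) (m + 2)"
proof -
  have "\<bar>0 - k\<bar> < int n"
    using assms(2,3) int_n by simp
  from circ_adj_circ_shift_iff[OF this, of u] assms have "k \<in> edge_differences m"
    by (simp add: circ_shift_0)
  with assms(2,3) obtain A where A: "A \<subseteq> {0..<int n}" "card A = m + 2"
    and non_adj: "\<And>a b. a \<in> A \<Longrightarrow> b \<in> A \<Longrightarrow> a \<noteq> b \<Longrightarrow> {a, b} \<noteq> {0, k} \<Longrightarrow>
      \<bar>a - b\<bar> \<notin> edge_differences m"
    by (rule independent_offsets) blast
  have "cnorm n (a - b) \<notin> S"
    if "a \<in> A" "b \<in> A" "a \<noteq> b" "{a, b} \<noteq> {0, k}" for a b
  proof -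
    have "\<bar>a - b\<bar> < int n"
      using subsetD[OF A(1) that(1)] subsetD[OF A(1) that(2)] by (auto simp: abs_less_iff)
    then show ?thesis
      using non_adj[OF that] cnorm_mem_S_iff by simp
  qed
  then show ?thesis
    by (rule has_indep_remove_edge_circ_shift[OF n_pos assms(1) A])
qed

lemma add_edge_creates_4_clique:
  assumes "u \<in> circ_vertices n" "v \<in> circ_vertices n" "u \<noteq> v" "\<not> circ_adj n S u v"
  shows "has_clique (circ_vertices n) (add_edge (circ_adj n S) u v) 4"
proof -
  have "u < n" "v < n"
    using assms(1,2) by (simp_all add: circ_vertices_def)
  from this assms(3) show ?thesis
  proof (cases rule: obtain_short_offset)
    case (1 k)
    then show ?thesis
      using add_edge_circ_shift_creates_4_clique[of u k] \<open>u < n\<close> assms(4) by simp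
  next
    case (2 k)
    then have "has_clique (circ_vertices n) (add_edge (circ_adj n S) v u) 4"
      using add_edge_circ_shift_creates_4_clique[of v k] \<open>v < n\<close> assms(4) circ_adj_commute
      by simp
    then show ?thesis
      by (subst add_edge_commute)
  qed
qed

lemma remove_edge_creates_independent_set:
  assumes "u \<in> circ_vertices n" "v \<in> circ_vertices n" "u \<noteq> v" "circ_adj n S u v"
  shows "has_indep (circ_vertices n) (remove_edge (circ_adj n S) u v) (m + 2)"
proof -
  have "u < n" "v < n"
    using assms(1,2) by (simp_all add: circ_vertices_def)
  from this assms(3) show ?thesis
  proof (cases rule: obtain_short_offset)
    case (1 k)
    then show ?thesis
      using remove_edge_circ_shift_creates_independent_set[of u k] \<open>u < n\<close> assms(4) by simp
  next
    case (2 k)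
    then have "has_indep (circ_vertices n) (remove_edge (circ_adj n S) v u) (m + 2)"
      using remove_edge_circ_shift_creates_independent_set[of v k] \<open>v < n\<close> assms(4)
        circ_adj_commute
      by simp
    then show ?thesis
      by (subst remove_edge_commute)
  qed
qed

lemma exists_non_edge: "\<exists>u\<in>circ_vertices n. \<exists>v\<in>circ_vertices n. u \<noteq> v \<and> \<not> circ_adj n S u v"
proof (intro bexI conjI)
  show "\<not> circ_adj n S 0 1"
    using circ_adj_iff[of 0 1] m_ge_2 n_eq by (simp add: mem_edge_differences)
qed (use m_ge_2 n_eq in \<open>simp_all add: circ_vertices_def\<close>)

lemma exists_edge: "\<exists>u\<in>circ_vertices n. \<exists>v\<in>circ_vertices n. u \<noteq> v \<and> circ_adj n S u v"
proof (intro bexI conjI)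
  show "circ_adj n S 0 m"
    using circ_adj_iff[of 0 m] m_ge_2 n_eq by (simp add: mem_edge_differences)
qed (use m_ge_2 n_eq in \<open>simp_all add: circ_vertices_def\<close>)

end

theorem mainTheorem2:
  fixes m :: nat
  assumes "m \<ge> 2"
  defines "n \<equiv> 6 * m + 1"
      and "S \<equiv> {int m} \<union> {int (2*m+1)..int (3*m)}"
  shows "doubly_saturated_good 4 (m + 2) (circ_vertices n) (circ_adj n S)
    \<and> \<not> has_clique (circ_vertices n) (circ_adj n S) 4
    \<and> \<not> has_indep (circ_vertices n) (circ_adj n S) (m + 2)
    \<and> (\<forall>u\<in>circ_vertices n. \<forall>v\<in>circ_vertices n. u \<noteq> v \<and> \<not> circ_adj n S u v \<longrightarrow>
          has_clique (circ_vertices n) (add_edge (circ_adj n S) u v) 4)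
    \<and> (\<forall>u\<in>circ_vertices n. \<forall>v\<in>circ_vertices n. u \<noteq> v \<and> circ_adj n S u v \<longrightarrow>
          has_indep (circ_vertices n) (remove_edge (circ_adj n S) u v) (m + 2))"
proof -
  interpret circulant_R4_good m n S
    by unfold_locales (simp_all add: assms n_def S_def)
  show ?thesis
    unfolding doubly_saturated_good_def ramsey_good_def
    using no_4_clique no_independent_set exists_non_edge exists_edge
      add_edge_creates_4_clique remove_edge_creates_independent_set
    by blast
qed

end
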